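(* Let $r_{\rm A}>0$ and $\theta_{\rm A}\in\,]0,\pi/2[$. The function $$T_D^S(\eta)=\int_{\theta_{\rm A}}^{\pi-\theta_{\rm A}}\frac{r_{\rm A}^{3/2}(1-\eta\sin\theta_{\rm A})^{3/2}}{(1-\eta\sin\theta)^2}\,{\rm d}\theta,\qquad\eta\in\,]-\infty,1[,$$ is strictly convex, with ${\rm d}^2T_D^S/{\rm d}\eta^2>0$ everywhere.
   Context: $T_D^S(\eta)$ is the elapsed time, for the Kepler problem $\ddot q=-q/|q|^3$ with center ${\rm O}$ at the origin, of the direct Keplerian arc from ${\rm A}=(r_{\rm A}\cos\theta_{\rm A},r_{\rm A}\sin\theta_{\rm A})$ to ${\rm B}=(-r_{\rm A}\cos\theta_{\rm A},r_{\rm A}\sin\theta_{\rm A})$ on the conic with polar equation $r=r_{\rm A}(1-\eta\sin\theta_{\rm A})/(1-\eta\sin\theta)$; $\eta$ is the signed eccentricity. *)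

theory Defs
  imports "HOL-Analysis.Analysis"
begin

text \<open>Elapsed time of the direct Keplerian arc from A to B as a function of the signed
  eccentricity eta, given by the integral formula of the paper.\<close>
definition TDS :: "real \<Rightarrow> real \<Rightarrow> real \<Rightarrow> real" where
  "TDS rA thA eta = integral {thA .. pi - thA}
     (\<lambda>\<theta>. rA powr (3/2) * (1 - eta * sin thA) powr (3/2) / (1 - eta * sin \<theta>)\<^sup>2)"

definition strictly_convex_on :: "real set \<Rightarrow> (real \<Rightarrow> real) \<Rightarrow> bool" where
  "strictly_convex_on S f \<longleftrightarrow>
     (\<forall>x\<in>S. \<forall>y\<in>S. x \<noteq> y \<longrightarrow> (\<forall>u::real. 0 < u \<and> u < 1 \<longrightarrow>
        f ((1 - u) * x + u * y) < (1 - u) * f x + u * f y))"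

end

theory Submission
  imports Defs
begin

text \<open>Differentiate twice under the integral sign. With \<open>a = sin \<theta>\<^sub>A\<close>, the integrand
  \<open>(1 - \<eta> a)\<^sup>3\<^sup>/\<^sup>2 / (1 - \<eta> sin \<theta>)\<^sup>2\<close> has second \<open>\<eta>\<close>-derivative equal to itself times
  \<open>6 q (q - p) + 3/4 p\<^sup>2\<close>, where \<open>p = a / (1 - \<eta> a)\<close> and \<open>q = sin \<theta> / (1 - \<eta> sin \<theta>)\<close>.
  On the arc \<open>sin \<theta> \<ge> a > 0\<close>, so \<open>q \<ge> p > 0\<close> and the second derivative of the elapsed
  time is the integral of a positive continuous function.\<close>

lemma strictly_convex_onI_less:
  fixes f :: "real \<Rightarrow> real"
  assumes "\<And>x y u. x \<in> S \<Longrightarrow> y \<in> S \<Longrightarrow> x < y \<Longrightarrow> 0 < u \<Longrightarrow> u < 1 \<Longrightarrow>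
      f ((1 - u) * x + u * y) < (1 - u) * f x + u * f y"
  shows "strictly_convex_on S f"
  unfolding strictly_convex_on_def
proof (intro ballI impI allI)
  fix x y u :: real assume xy: "x \<in> S" "y \<in> S" "x \<noteq> y" and u: "0 < u \<and> u < 1"
  show "f ((1 - u) * x + u * y) < (1 - u) * f x + u * f y"
  proof (cases "x < y")
    case True
    with xy u assms show ?thesis by blast
  next
    case False
    with xy u assms[of y x "1 - u"] show ?thesis
      by (simp add: algebra_simps)
  qed
qed

lemma strictly_convex_on_if_deriv_strict_mono:
  fixes f f' :: "real \<Rightarrow> real"
  assumes "convex S"
    and deriv: "\<And>x. x \<in> S \<Longrightarrow> (f has_real_derivative f' x) (at x)"
    and mono: "\<And>x y. x \<in> S \<Longrightarrow> y \<in> S \<Longrightarrow> x < y \<Longrightarrow> f' x < f' y"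
  shows "strictly_convex_on S f"
proof (rule strictly_convex_onI_less)
  fix x y u :: real assume S: "x \<in> S" "y \<in> S" and "x < y" "0 < u" "u < 1"
  define z where "z = (1 - u) * x + u * y"
  have zx: "z - x = u * (y - x)" and yz: "y - z = (1 - u) * (y - x)"
    by (simp_all add: z_def algebra_simps)
  have "0 < u * (y - x)" "0 < (1 - u) * (y - x)"
    using \<open>x < y\<close> \<open>0 < u\<close> \<open>u < 1\<close> by simp_all
  then have "x < z" "z < y"
    unfolding zx[symmetric] yz[symmetric] by simp_all
  have between: "t \<in> S" if "x \<le> t" "t \<le> y" for t
    using mem_is_interval_1_I[of S x y t] \<open>convex S\<close> S that
    by (simp add: is_interval_convex_1)
  obtain p where p: "x < p" "p < z" "f z - f x = (z - x) * f' p"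
    using MVT2[OF \<open>x < z\<close>, of f f'] deriv between \<open>z < y\<close> by force
  obtain q where q: "z < q" "q < y" "f y - f z = (y - z) * f' q"
    using MVT2[OF \<open>z < y\<close>, of f f'] deriv between \<open>x < z\<close> by force
  have "f' p < f' q"
    using mono between p q \<open>x < z\<close> \<open>z < y\<close> by simp
  have "(1 - u) * f x + u * f y - f z = u * (f y - f z) - (1 - u) * (f z - f x)"
    by (simp add: algebra_simps)
  also have "\<dots> = u * (1 - u) * (y - x) * (f' q - f' p)"
    unfolding p(3) q(3) zx yz by (simp add: algebra_simps)
  also have "\<dots> > 0"
    using \<open>x < y\<close> \<open>0 < u\<close> \<open>u < 1\<close> \<open>f' p < f' q\<close> by simp
  finally show "f ((1 - u) * x + u * y) < (1 - u) * f x + u * f y"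
    unfolding z_def by simp
qed

lemma strictly_convex_on_if_second_deriv_pos:
  fixes f f' f'' :: "real \<Rightarrow> real"
  assumes "convex S"
    and "\<And>x. x \<in> S \<Longrightarrow> (f has_real_derivative f' x) (at x)"
    and deriv': "\<And>x. x \<in> S \<Longrightarrow> (f' has_real_derivative f'' x) (at x)"
    and pos: "\<And>x. x \<in> S \<Longrightarrow> f'' x > 0"
  shows "strictly_convex_on S f"
proof (rule strictly_convex_on_if_deriv_strict_mono[OF assms(1,2)])
  fix x y assume "x \<in> S" "y \<in> S" "x < y"
  then have "t \<in> S" if "x \<le> t" "t \<le> y" for t
    using mem_is_interval_1_I[of S x y t] \<open>convex S\<close> that
    by (simp add: is_interval_convex_1)
  with deriv' pos show "f' x < f' y"
    by (intro DERIV_pos_imp_increasing[OF \<open>x < y\<close>]) blast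
qed

lemma has_real_derivative_integral_parametric:
  fixes G G' :: "real \<Rightarrow> real \<Rightarrow> real"
  assumes "open S" "convex S" "x \<in> S"
    and deriv: "\<And>x t. x \<in> S \<Longrightarrow> t \<in> {c..d} \<Longrightarrow> ((\<lambda>x. G x t) has_real_derivative G' x t) (at x)"
    and cont: "\<And>x. x \<in> S \<Longrightarrow> continuous_on {c..d} (G x)"
    and cont': "continuous_on (S \<times> {c..d}) (\<lambda>(x, t). G' x t)"
  shows "((\<lambda>x. integral {c..d} (G x)) has_real_derivative integral {c..d} (G' x)) (at x)"
proof -
  have "((\<lambda>x. integral (cbox c d) (G x)) has_real_derivative integral (cbox c d) (G' x)) (at x within S)"
  proof (rule leibniz_rule_field_derivative)
    show "((\<lambda>x. G x t) has_real_derivative G' y t) (at y within S)" if "y \<in> S" "t \<in> cbox c d" for y t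
      using deriv that by (simp add: has_field_derivative_at_within)
    show "G y integrable_on cbox c d" if "y \<in> S" for y
      using cont that by (simp add: integrable_continuous_interval)
  qed (use assms in auto)
  then show ?thesis
    using at_within_open[OF \<open>x \<in> S\<close> \<open>open S\<close>] by simp
qed

text \<open>With \<open>p = a / (1 - e * a)\<close> and \<open>q = s / (1 - e * s)\<close> one has \<open>p' = p\<^sup>2\<close>,
  \<open>q' = q\<^sup>2\<close>, and the logarithmic derivative of \<open>time_density a s\<close> is \<open>2 q - 3/2 p\<close>; so the
  second derivative is \<open>time_density a s e\<close> times \<open>(2 q - 3/2 p)\<^sup>2 + 2 q\<^sup>2 - 3/2 p\<^sup>2\<close>.\<close>

definition time_density :: "real \<Rightarrow> real \<Rightarrow> real \<Rightarrow> real" where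
  "time_density a s e = (1 - e * a) powr (3/2) / (1 - e * s)\<^sup>2"

definition time_density' :: "real \<Rightarrow> real \<Rightarrow> real \<Rightarrow> real" where
  "time_density' a s e = time_density a s e * (2 * (s / (1 - e * s)) - 3/2 * (a / (1 - e * a)))"

definition time_density'' :: "real \<Rightarrow> real \<Rightarrow> real \<Rightarrow> real" where
  "time_density'' a s e = time_density a s e *
     (6 * (s / (1 - e * s)) * (s / (1 - e * s) - a / (1 - e * a)) + 3/4 * (a / (1 - e * a))\<^sup>2)"

lemma has_real_derivative_divide_one_minus:
  fixes a e :: real
  assumes "e * a \<noteq> 1"
  shows "((\<lambda>e. a / (1 - e * a)) has_real_derivative (a / (1 - e * a))\<^sup>2) (at e)"
proof -
  have "1 - e * a \<noteq> 0"
    using assms by simp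
  then show ?thesis
    by (auto intro!: derivative_eq_intros simp: power_divide power2_eq_square)
qed

lemma has_real_derivative_time_density:
  assumes "e * a < 1" "e * s < 1"
  shows "((\<lambda>e. time_density a s e) has_real_derivative time_density' a s e) (at e)"
proof -
  define u v where "u = 1 - e * a" and "v = 1 - e * s"
  have uv: "u > 0" "v > 0" using assms by (auto simp: u_def v_def)
  have "((\<lambda>e. (1 - e * a) powr (3/2) / (1 - e * s)\<^sup>2) has_real_derivative
      (3/2 * u powr (1/2) * (- a) * v\<^sup>2 - u powr (3/2) * (2 * v * (- s))) / (v\<^sup>2)\<^sup>2) (at e)"
    unfolding u_def v_def using assms
    by (auto intro!: derivative_eq_intros)
  moreover have "u powr (3/2) = u * u powr (1/2)"
    using uv powr_add[of u 1 "1/2"] by simp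
  then have "(3/2 * u powr (1/2) * (- a) * v\<^sup>2 - u powr (3/2) * (2 * v * (- s))) / (v\<^sup>2)\<^sup>2
      = time_density' a s e"
    unfolding time_density'_def time_density_def u_def[symmetric] v_def[symmetric]
    using uv by (simp add: field_simps power2_eq_square)
  ultimately show ?thesis
    unfolding time_density_def by simp
qed

lemma has_real_derivative_time_density':
  assumes "e * a < 1" "e * s < 1"
  shows "((\<lambda>e. time_density' a s e) has_real_derivative time_density'' a s e) (at e)"
proof -
  define p q where "p = a / (1 - e * a)" and "q = s / (1 - e * s)"
  have "((\<lambda>e. 2 * (s / (1 - e * s)) - 3/2 * (a / (1 - e * a))) has_real_derivative
      2 * q\<^sup>2 - 3/2 * p\<^sup>2) (at e)"
    unfolding p_def q_def using assms
    by (intro DERIV_diff DERIV_cmult has_real_derivative_divide_one_minus) auto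
  from DERIV_mult[OF has_real_derivative_time_density[OF assms] this]
  have "((\<lambda>e. time_density' a s e) has_real_derivative
      time_density' a s e * (2 * q - 3/2 * p) + (2 * q\<^sup>2 - 3/2 * p\<^sup>2) * time_density a s e) (at e)"
    by (simp add: time_density'_def p_def q_def)
  moreover have "time_density' a s e * (2 * q - 3/2 * p) + (2 * q\<^sup>2 - 3/2 * p\<^sup>2) * time_density a s e
      = time_density'' a s e"
    unfolding time_density'_def time_density''_def p_def[symmetric] q_def[symmetric]
    by (simp add: algebra_simps power2_eq_square)
  ultimately show ?thesis
    by simp
qed

lemma time_density''_pos:
  assumes "0 < a" "a \<le> s" "e * a < 1" "e * s < 1"
  shows "time_density'' a s e > 0"
proof -
  define p q where "p = a / (1 - e * a)" and "q = s / (1 - e * s)"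
  have "q - p = (s - a) / ((1 - e * s) * (1 - e * a))"
    using assms by (simp add: p_def q_def field_simps)
  moreover have "(s - a) / ((1 - e * s) * (1 - e * a)) \<ge> 0"
    using assms by (simp add: divide_nonneg_pos)
  ultimately have "q \<ge> p"
    by simp
  moreover have "p > 0"
    using assms by (simp add: p_def)
  moreover have "time_density a s e > 0"
    using assms by (simp add: time_density_def)
  ultimately show ?thesis
    unfolding time_density''_def p_def[symmetric] q_def[symmetric]
    by (simp add: zero_less_mult_iff add_nonneg_pos)
qed

lemma continuous_on_time_density:
  assumes "continuous_on S e" "continuous_on S s"
    and "\<And>x. x \<in> S \<Longrightarrow> e x * a < 1" "\<And>x. x \<in> S \<Longrightarrow> e x * s x < 1"
  shows "continuous_on S (\<lambda>x. time_density a (s x) (e x))"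
    and "continuous_on S (\<lambda>x. time_density' a (s x) (e x))"
    and "continuous_on S (\<lambda>x. time_density'' a (s x) (e x))"
proof -
  have "e x * a \<noteq> 1" "e x * s x \<noteq> 1" if "x \<in> S" for x
    using assms(3,4)[OF that] by auto
  with assms(1,2) show "continuous_on S (\<lambda>x. time_density a (s x) (e x))"
    and "continuous_on S (\<lambda>x. time_density' a (s x) (e x))"
    and "continuous_on S (\<lambda>x. time_density'' a (s x) (e x))"
    by (auto simp: time_density_def time_density'_def time_density''_def
        intro!: continuous_intros)
qed

lemma mult_less_one_if_le_one:
  fixes e s :: real
  assumes "e < 1" "0 \<le> s" "s \<le> 1"
  shows "e * s < 1"
  using assms by (smt (verit) mult_left_le mult_nonpos_nonneg)

lemma sin_le_sin_on_symmetric_interval: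
  assumes "0 \<le> x" "x \<le> t" "t \<le> pi - x"
  shows "sin x \<le> sin t"
proof (cases "t \<le> pi/2")
  case True
  then show ?thesis using assms by (intro sin_monotone_2pi_le) auto
next
  case False
  then have "sin x \<le> sin (pi - t)" using assms by (intro sin_monotone_2pi_le) auto
  then show ?thesis by simp
qed

context
  fixes a c d :: real
  assumes a_pos: "0 < a" and "c < d" and a_le_sin: "\<And>t. t \<in> {c..d} \<Longrightarrow> a \<le> sin t"
begin

lemma time_density_domain:
  assumes "e < 1" "t \<in> {c..d}"
  shows "e * a < 1" and "e * sin t < 1"
proof -
  have "0 < a" "a \<le> 1" "0 \<le> sin t" "sin t \<le> 1"
    using a_pos a_le_sin[OF \<open>t \<in> {c..d}\<close>] sin_le_one[of t] by linarith+
  then show "e * a < 1" "e * sin t < 1"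
    by (simp_all add: mult_less_one_if_le_one[OF \<open>e < 1\<close>])
qed

lemma continuous_on_time_densities:
  shows "continuous_on ({..<1} \<times> {c..d}) (\<lambda>(e, t). time_density' a (sin t) e)"
    and "continuous_on ({..<1} \<times> {c..d}) (\<lambda>(e, t). time_density'' a (sin t) e)"
    and "e < 1 \<Longrightarrow> continuous_on {c..d} (\<lambda>t. time_density a (sin t) e)"
    and "e < 1 \<Longrightarrow> continuous_on {c..d} (\<lambda>t. time_density' a (sin t) e)"
    and "e < 1 \<Longrightarrow> continuous_on {c..d} (\<lambda>t. time_density'' a (sin t) e)"
  unfolding case_prod_beta'
  by (intro continuous_intros continuous_on_time_density; force intro: time_density_domain)+

lemma has_real_derivative_integral_time_density:
  assumes "e < 1"
  shows "((\<lambda>e. integral {c..d} (\<lambda>t. time_density a (sin t) e)) has_real_derivative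
      integral {c..d} (\<lambda>t. time_density' a (sin t) e)) (at e)"
  using assms has_real_derivative_time_density time_density_domain continuous_on_time_densities
  by (intro has_real_derivative_integral_parametric[where S="{..<1}"]) auto

lemma has_real_derivative_integral_time_density':
  assumes "e < 1"
  shows "((\<lambda>e. integral {c..d} (\<lambda>t. time_density' a (sin t) e)) has_real_derivative
      integral {c..d} (\<lambda>t. time_density'' a (sin t) e)) (at e)"
  using assms has_real_derivative_time_density' time_density_domain continuous_on_time_densities
  by (intro has_real_derivative_integral_parametric[where S="{..<1}"]) auto

lemma integral_time_density''_pos:
  assumes "e < 1"
  shows "integral {c..d} (\<lambda>t. time_density'' a (sin t) e) > 0"
proof -
  have "0 < time_density'' a (sin t) e" if "t \<in> {c..d}" for t
    using time_density''_pos[OF a_pos a_le_sin time_density_domain] assms that by blast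
  then have "integral {c..d} (\<lambda>_. 0) < integral {c..d} (\<lambda>t. time_density'' a (sin t) e)"
    using \<open>c < d\<close> continuous_on_time_densities(5)[OF assms]
    by (intro integral_less_real) auto
  then show ?thesis
    by simp
qed

end

theorem proposition5:
  fixes rA thA :: real
  assumes "rA > 0" and "0 < thA" and "thA < pi / 2"
  shows "strictly_convex_on {..<1} (TDS rA thA) \<and>
    (\<exists>T' T'' :: real \<Rightarrow> real. \<forall>eta < 1.
       (TDS rA thA has_real_derivative T' eta) (at eta) \<and>
       (T' has_real_derivative T'' eta) (at eta) \<and>
       T'' eta > 0)"
proof -
  define a K where "a = sin thA" and "K = rA powr (3/2)"
  define T T' T'' where "T H e = K * integral {thA..pi - thA} (\<lambda>t. H a (sin t) e)"
    and "T' = T time_density'" and "T'' = T time_density''" for H e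
  have hyps: "0 < a" "thA < pi - thA" "\<And>t. t \<in> {thA..pi - thA} \<Longrightarrow> a \<le> sin t"
    using assms sin_gt_zero[of thA] sin_le_sin_on_symmetric_interval[of thA]
    by (auto simp: a_def)
  have "TDS rA thA = T time_density"
    by (simp add: fun_eq_iff TDS_def T_def time_density_def K_def a_def flip: integral_mult_right)
  moreover have "(T time_density has_real_derivative T' e) (at e)"
    and "(T' has_real_derivative T'' e) (at e)" and "T'' e > 0" if "e < 1" for e
    unfolding T'_def T''_def T_def
    using has_real_derivative_integral_time_density[OF hyps that]
      has_real_derivative_integral_time_density'[OF hyps that]
      integral_time_density''_pos[OF hyps that] \<open>rA > 0\<close>
    by (auto intro: DERIV_cmult simp: K_def)
  ultimately show ?thesis
    using strictly_convex_on_if_second_deriv_pos[of "{..<1}" "T time_density" T' T''] by simp blast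
qed

end
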